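(* Let $r\ge3$ and $s\ge1$ be integers with $r\le s+1$, and let $g=(r+1)s$ and $d=g+r-s$. Let $\Gamma$ be a chain of $g$ loops with admissible edge lengths, and let $D$ be the $w_0$-reduced vertex avoiding divisor of degree $d$ and rank $r$ corresponding to the standard tableau, in which column $\alpha$ (for $0\le\alpha\le r$) contains $\alpha s+1,\dots,(\alpha+1)s$. Let $\mathcal A$ be any set of multisets of size $3$ in $\{0,\dots,r\}$, and let $b_I$ be real constants such that at every point of $\Gamma$ the minimum $\theta=\min_{I\in\mathcal A}(\psi_I+b_I)$ is attained at least twice. Then $\sigma_s\le3r+s-4$ and $\sigma_{rs}\ge2s+4$.
   Context: Chain of loops: $\Gamma$ has vertices $w_0,\dots,w_g$ and $v_1,\dots,v_{g+1}$. For $1\le k\le g$ there are two edges (top and bottom) of lengths $\ell_k,m_k$ joining $v_k$ and $w_k$, forming the loop $\gamma_k^\circ$. For $0\le k\le g$ a bridge $\beta_k$ of length $n_k$ joins $w_k$ and $v_{k+1}$. The point $u_k$ is the midpoint of $\beta_k$. Admissible edge lengths: - $4g\,m_k<\ell_k\ll\min\{n_{k-1},n_k\}$; - there is no nontrivial relation $\sum c_km_k=0$ with integers $|c_k|\le g+1$; - for $0\le\alpha\le r$, $\sum_{i=\alpha s+1}^{(\alpha+1)s}\ell_i+\sum_{i=\alpha s+1}^{(\alpha+1)s-1}n_i\ll\min\{n_{\alpha s},n_{(\alpha+1)s}\}$. Tableau and lattice path: the tableau determines the lattice path $p_0,\dots,p_g\in\mathbb Z^r$ with $p_0=(r,r-1,\dots,1)$.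 The step $p_t-p_{t-1}$ is $e_j$ if $t$ is in column $j<r$, and $(-1,\dots,-1)$ if $t$ is in column $r$. Functions: $D_i\sim D$ is the unique effective divisor with $\deg_{w_0}D_i=i$ and $\deg_{v_{g+1}}D_i=r-i$, and $\psi_i$ satisfies $D+\operatorname{div}\psi_i=D_i$. The slope of $\psi_i$ on $\beta_t$, going right, is $p_t(i)$, with $p_t(r)=0$. For a multiset $I$, $\psi_I=\sum_{i\in I}\psi_i$, up to a constant. Slopes: $\sigma_k\psi$ is the slope of $\psi$ at $u_k$ going right, and $\sigma_k=\sigma_k\theta$. *)

theory Defs
  imports Complex_Main "HOL-Library.Multiset"
begin

text \<open>Edge lengths are given by functions
  L k = ell_k (top edge of loop k), M k = m_k (bottom edge of loop k),
  N k = n_k (bridge beta_k).  Points of the metric graph are represented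
  canonically: Br k x is the point of the bridge beta_k at distance x from w_k
  (0 <= x <= n_k; Br k 0 = w_k and Br k n_k = v_(k+1));
  Tp k x / Bt k x are interior points of the top / bottom edge of loop k at
  distance x from v_k.\<close>

datatype cpt = Br nat real | Tp nat real | Bt nat real

definition cpoints :: "nat \<Rightarrow> (nat \<Rightarrow> real) \<Rightarrow> (nat \<Rightarrow> real) \<Rightarrow> (nat \<Rightarrow> real) \<Rightarrow> cpt set" where
  "cpoints g L M N =
     {Br k x | k x. k \<le> g \<and> 0 \<le> x \<and> x \<le> N k}
   \<union> {Tp k x | k x. 1 \<le> k \<and> k \<le> g \<and> 0 < x \<and> x < L k}
   \<union> {Bt k x | k x. 1 \<le> k \<and> k \<le> g \<and> 0 < x \<and> x < M k}"

definition wv :: "nat \<Rightarrow> cpt" where "wv k = Br k 0"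
definition vv :: "(nat \<Rightarrow> real) \<Rightarrow> nat \<Rightarrow> cpt" where "vv N k = Br (k - 1) (N (k - 1))"
definition uu :: "(nat \<Rightarrow> real) \<Rightarrow> nat \<Rightarrow> cpt" where "uu N k = Br k (N k / 2)"

datatype cedge = EB nat | ET nat | EM nat

definition cedges :: "nat \<Rightarrow> cedge set" where
  "cedges g = EB ` {0..g} \<union> ET ` {1..g} \<union> EM ` {1..g}"

fun elen :: "(nat \<Rightarrow> real) \<Rightarrow> (nat \<Rightarrow> real) \<Rightarrow> (nat \<Rightarrow> real) \<Rightarrow> cedge \<Rightarrow> real" where
  "elen L M N (EB k) = N k"
| "elen L M N (ET k) = L k"
| "elen L M N (EM k) = M k"

fun emap :: "(nat \<Rightarrow> real) \<Rightarrow> (nat \<Rightarrow> real) \<Rightarrow> (nat \<Rightarrow> real) \<Rightarrow> cedge \<Rightarrow> real \<Rightarrow> cpt" where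
  "emap L M N (EB k) x = Br k x"
| "emap L M N (ET k) x = (if x = 0 then vv N k else if x = L k then wv k else Tp k x)"
| "emap L M N (EM k) x = (if x = 0 then vv N k else if x = M k then wv k else Bt k x)"

definition pl_on :: "real \<Rightarrow> (real \<Rightarrow> real) \<Rightarrow> bool" where
  "pl_on len h \<longleftrightarrow> (\<exists>B. finite B \<and>
     (\<forall>a b. 0 \<le> a \<and> a < b \<and> b \<le> len \<and> {a<..<b} \<inter> B = {} \<longrightarrow>
        (\<exists>c::int. \<forall>x\<in>{a..b}. \<forall>y\<in>{a..b}. h y - h x = of_int c * (y - x))))"

definition rational_fn :: "nat \<Rightarrow> (nat \<Rightarrow> real) \<Rightarrow> (nat \<Rightarrow> real) \<Rightarrow> (nat \<Rightarrow> real) \<Rightarrow> (cpt \<Rightarrow> real) \<Rightarrow> bool" where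
  "rational_fn g L M N f \<longleftrightarrow>
     (\<forall>e\<in>cedges g. pl_on (elen L M N e) (\<lambda>x. f (emap L M N e x)))"

definition rslope :: "(real \<Rightarrow> real) \<Rightarrow> real \<Rightarrow> real" where
  "rslope h x = (THE c. (h has_real_derivative c) (at_right x))"
definition lslope :: "(real \<Rightarrow> real) \<Rightarrow> real \<Rightarrow> real" where
  "lslope h x = (THE c. (h has_real_derivative c) (at_left x))"

text \<open>Order of f at p: sum of the incoming slopes of f over all tangent directions at p
  (so that D + div psi_i = D_i in the paper's convention).\<close>
definition ordf :: "nat \<Rightarrow> (nat \<Rightarrow> real) \<Rightarrow> (nat \<Rightarrow> real) \<Rightarrow> (nat \<Rightarrow> real) \<Rightarrow> (cpt \<Rightarrow> real) \<Rightarrow> cpt \<Rightarrow> real" where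
  "ordf g L M N f p =
    (\<Sum>e\<in>cedges g. \<Sum>x\<in>{x. 0 \<le> x \<and> x \<le> elen L M N e \<and> emap L M N e x = p}.
        (if 0 < x then lslope (\<lambda>y. f (emap L M N e y)) x else 0)
      - (if x < elen L M N e then rslope (\<lambda>y. f (emap L M N e y)) x else 0))"

definition is_divisor :: "nat \<Rightarrow> (nat \<Rightarrow> real) \<Rightarrow> (nat \<Rightarrow> real) \<Rightarrow> (nat \<Rightarrow> real) \<Rightarrow> (cpt \<Rightarrow> int) \<Rightarrow> bool" where
  "is_divisor g L M N D \<longleftrightarrow> finite {p. D p \<noteq> 0} \<and> {p. D p \<noteq> 0} \<subseteq> cpoints g L M N"

definition ddeg :: "(cpt \<Rightarrow> int) \<Rightarrow> int" where
  "ddeg D = (\<Sum>p\<in>{p. D p \<noteq> 0}. D p)"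

definition effective :: "(cpt \<Rightarrow> int) \<Rightarrow> bool" where
  "effective D \<longleftrightarrow> (\<forall>p. 0 \<le> D p)"

definition lin_equiv :: "nat \<Rightarrow> (nat \<Rightarrow> real) \<Rightarrow> (nat \<Rightarrow> real) \<Rightarrow> (nat \<Rightarrow> real) \<Rightarrow> (cpt \<Rightarrow> int) \<Rightarrow> (cpt \<Rightarrow> int) \<Rightarrow> bool" where
  "lin_equiv g L M N D D' \<longleftrightarrow> (\<exists>f. rational_fn g L M N f \<and>
     (\<forall>p\<in>cpoints g L M N. real_of_int (D' p) = real_of_int (D p) + ordf g L M N f p))"

definition rank_at_least :: "nat \<Rightarrow> (nat \<Rightarrow> real) \<Rightarrow> (nat \<Rightarrow> real) \<Rightarrow> (nat \<Rightarrow> real) \<Rightarrow> (cpt \<Rightarrow> int) \<Rightarrow> nat \<Rightarrow> bool" where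
  "rank_at_least g L M N D k \<longleftrightarrow> (\<forall>E. is_divisor g L M N E \<and> effective E \<and> ddeg E = int k \<longrightarrow>
     (\<exists>f. rational_fn g L M N f \<and>
        (\<forall>p\<in>cpoints g L M N. 0 \<le> real_of_int (D p - E p) + ordf g L M N f p)))"

definition has_rank :: "nat \<Rightarrow> (nat \<Rightarrow> real) \<Rightarrow> (nat \<Rightarrow> real) \<Rightarrow> (nat \<Rightarrow> real) \<Rightarrow> (cpt \<Rightarrow> int) \<Rightarrow> nat \<Rightarrow> bool" where
  "has_rank g L M N D k \<longleftrightarrow> rank_at_least g L M N D k \<and> \<not> rank_at_least g L M N D (k + 1)"

text \<open>w_0-reduced divisors (Dhar's criterion in functional form): D is effective away
  from w_0 and whenever D + div f is effective away from w_0, f attains its minimum at w_0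
  (the minimum locus of f is the set that is fired).\<close>
definition w0_reduced :: "nat \<Rightarrow> (nat \<Rightarrow> real) \<Rightarrow> (nat \<Rightarrow> real) \<Rightarrow> (nat \<Rightarrow> real) \<Rightarrow> (cpt \<Rightarrow> int) \<Rightarrow> bool" where
  "w0_reduced g L M N D \<longleftrightarrow>
     (\<forall>p\<in>cpoints g L M N - {wv 0}. 0 \<le> D p) \<and>
     (\<forall>f. rational_fn g L M N f \<and>
          (\<forall>p\<in>cpoints g L M N - {wv 0}. 0 \<le> real_of_int (D p) + ordf g L M N f p)
          \<longrightarrow> (\<forall>x\<in>cpoints g L M N. f (wv 0) \<le> f x))"

definition is_Di :: "nat \<Rightarrow> (nat \<Rightarrow> real) \<Rightarrow> (nat \<Rightarrow> real) \<Rightarrow> (nat \<Rightarrow> real) \<Rightarrow> nat \<Rightarrow> (cpt \<Rightarrow> int) \<Rightarrow> nat \<Rightarrow> (cpt \<Rightarrow> int) \<Rightarrow> bool" where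
  "is_Di g L M N r D i D' \<longleftrightarrow> is_divisor g L M N D' \<and> effective D' \<and> lin_equiv g L M N D D' \<and>
     D' (wv 0) = int i \<and> D' (vv N (g + 1)) = int r - int i"

definition vertex_avoiding :: "nat \<Rightarrow> (nat \<Rightarrow> real) \<Rightarrow> (nat \<Rightarrow> real) \<Rightarrow> (nat \<Rightarrow> real) \<Rightarrow> nat \<Rightarrow> (cpt \<Rightarrow> int) \<Rightarrow> bool" where
  "vertex_avoiding g L M N r D \<longleftrightarrow> (\<forall>i\<le>r.
     (\<exists>!D'. is_Di g L M N r D i D') \<and>
     (\<forall>D'. is_Di g L M N r D i D' \<longrightarrow> (\<forall>k\<in>{1..g}. D' (vv N k) = 0 \<and> D' (wv k) = 0)))"

definition is_psi :: "nat \<Rightarrow> (nat \<Rightarrow> real) \<Rightarrow> (nat \<Rightarrow> real) \<Rightarrow> (nat \<Rightarrow> real) \<Rightarrow> nat \<Rightarrow> (cpt \<Rightarrow> int) \<Rightarrow> nat \<Rightarrow> (cpt \<Rightarrow> real) \<Rightarrow> bool" where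
  "is_psi g L M N r D i f \<longleftrightarrow> rational_fn g L M N f \<and>
     (\<forall>p\<in>cpoints g L M N. 0 \<le> real_of_int (D p) + ordf g L M N f p) \<and>
     real_of_int (D (wv 0)) + ordf g L M N f (wv 0) = real i \<and>
     real_of_int (D (vv N (g + 1))) + ordf g L M N f (vv N (g + 1)) = real r - real i"

text \<open>Lattice path of the standard tableau with column alpha = {alpha*s+1..(alpha+1)*s}:
  t lies in column (t-1) div s.  lp r s t i = p_t(i) for i < r.\<close>
fun lp :: "nat \<Rightarrow> nat \<Rightarrow> nat \<Rightarrow> nat \<Rightarrow> int" where
  "lp r s 0 i = int r - int i"
| "lp r s (Suc t) i = lp r s t i + (if t div s = r then -1 else if i = t div s then 1 else 0)"

definition bslope :: "nat \<Rightarrow> nat \<Rightarrow> nat \<Rightarrow> nat \<Rightarrow> int" where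
  "bslope r s t i = (if i = r then 0 else lp r s t i)"

text \<open>Admissible edge lengths; "a << b" is read as "K * a < b" for a constant K.\<close>
definition admissible :: "nat \<Rightarrow> nat \<Rightarrow> real \<Rightarrow> (nat \<Rightarrow> real) \<Rightarrow> (nat \<Rightarrow> real) \<Rightarrow> (nat \<Rightarrow> real) \<Rightarrow> bool" where
  "admissible r s K L M N \<longleftrightarrow> (let g = (r + 1) * s in
     (\<forall>k\<le>g. 0 < N k) \<and>
     (\<forall>k\<in>{1..g}. 0 < M k \<and> 4 * real g * M k < L k \<and> K * L k < N (k - 1) \<and> K * L k < N k) \<and>
     (\<forall>c::nat \<Rightarrow> int. (\<forall>k\<in>{1..g}. \<bar>c k\<bar> \<le> int g + 1) \<and> (\<Sum>k=1..g. real_of_int (c k) * M k) = 0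
         \<longrightarrow> (\<forall>k\<in>{1..g}. c k = 0)) \<and>
     (\<forall>\<alpha>\<le>r. K * ((\<Sum>i=\<alpha>*s+1..(\<alpha>+1)*s. L i) + (\<Sum>i=\<alpha>*s+1..(\<alpha>+1)*s-1. N i))
                 < min (N (\<alpha>*s)) (N ((\<alpha>+1)*s))))"

text \<open>The w_0-reduced vertex avoiding divisor of degree d and rank r corresponding to the
  standard tableau (tableau read off from the bridge slopes of the psi_i).\<close>
definition tab_divisor :: "nat \<Rightarrow> nat \<Rightarrow> (nat \<Rightarrow> real) \<Rightarrow> (nat \<Rightarrow> real) \<Rightarrow> (nat \<Rightarrow> real) \<Rightarrow> (cpt \<Rightarrow> int) \<Rightarrow> bool" where
  "tab_divisor r s L M N D \<longleftrightarrow> (let g = (r + 1) * s; d = g + r - s in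
     is_divisor g L M N D \<and> ddeg D = int d \<and> w0_reduced g L M N D \<and>
     has_rank g L M N D r \<and> vertex_avoiding g L M N r D \<and>
     (\<forall>i\<le>r. \<forall>f. is_psi g L M N r D i f \<longrightarrow>
        (\<forall>t\<le>g. \<forall>x\<in>{0..N t}. \<forall>y\<in>{0..N t}.
            f (Br t y) - f (Br t x) = of_int (bslope r s t i) * (y - x))))"

definition psiI :: "(nat \<Rightarrow> cpt \<Rightarrow> real) \<Rightarrow> nat multiset \<Rightarrow> cpt \<Rightarrow> real" where
  "psiI \<psi> I p = (\<Sum>i\<in>#I. \<psi> i p)"

definition theta :: "(nat \<Rightarrow> cpt \<Rightarrow> real) \<Rightarrow> nat multiset set \<Rightarrow> (nat multiset \<Rightarrow> real) \<Rightarrow> cpt \<Rightarrow> real" where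
  "theta \<psi> A b p = Min ((\<lambda>I. psiI \<psi> I p + b I) ` A)"

definition min_twice :: "cpt set \<Rightarrow> (nat \<Rightarrow> cpt \<Rightarrow> real) \<Rightarrow> nat multiset set \<Rightarrow> (nat multiset \<Rightarrow> real) \<Rightarrow> bool" where
  "min_twice P \<psi> A b \<longleftrightarrow> (\<forall>p\<in>P. \<exists>I\<in>A. \<exists>J\<in>A. I \<noteq> J \<and>
      psiI \<psi> I p + b I = theta \<psi> A b p \<and> psiI \<psi> J p + b J = theta \<psi> A b p)"

definition sigma :: "(nat \<Rightarrow> real) \<Rightarrow> (cpt \<Rightarrow> real) \<Rightarrow> nat \<Rightarrow> real" where
  "sigma N f k = rslope (\<lambda>x. f (Br k x)) (N k / 2)"

end

theory Submission
  imports Defs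
begin

(* On the bridge beta_t every psi_I + b_I is affine, with slope the sum of the bridge slopes
   p_t(i) over i in I, so theta is a lower envelope of finitely many affine functions. Just to
   the right of u_t the envelope agrees with one of them, and since the minimum is attained
   twice there, sigma_t is the slope sum of two distinct multisets I and J. On beta_s the slope
   vector is (r+s, r-1, r-2, ..., 0). As r <= s+1, the 3-term sums using the entry r+s twice are
   pairwise distinct and exceed all others, so the largest sum realised by two different
   multisets is (r+s)+(r-1)+(r-3) = (r+s)+(r-2)+(r-2). Dually, on beta_(rs) the slope vector is
   (r+s, r+s-1, ..., s+1, 0) and the smallest such sum is 0+(s+1)+(s+3) = 0+(s+2)+(s+2). *)

lemma rslope_eqI:
  assumes "(f has_real_derivative c) (at_right x)"
  shows "rslope f x = c"
  unfolding rslope_def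
  using assms has_field_derivative_unique trivial_limit_at_right_real by blast

lemma eventually_least_slope_minimal_at_right:
  fixes c e :: "'a \<Rightarrow> real"
  assumes "finite A"
    and min0: "\<forall>I\<in>A. c I0 * x0 + e I0 \<le> c I * x0 + e I"
    and least: "\<forall>I\<in>A. c I * x0 + e I = c I0 * x0 + e I0 \<longrightarrow> c I0 \<le> c I"
  shows "\<forall>\<^sub>F x in at_right x0. \<forall>I\<in>A.
           c I0 * x + e I0 \<le> c I * x + e I \<and> (c I * x + e I = c I0 * x + e I0 \<longrightarrow> c I = c I0)"
proof (rule eventually_ball_finite[OF \<open>finite A\<close>], rule ballI)
  fix I assume "I \<in> A"
  show "\<forall>\<^sub>F x in at_right x0.
          c I0 * x + e I0 \<le> c I * x + e I \<and> (c I * x + e I = c I0 * x + e I0 \<longrightarrow> c I = c I0)"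
  proof (cases "c I * x0 + e I = c I0 * x0 + e I0")
    case True
    have diff: "c I * x + e I - (c I0 * x + e I0) = (c I - c I0) * (x - x0)" for x
      using True by (simp add: algebra_simps)
    have "c I0 \<le> c I" using least True \<open>I \<in> A\<close> by blast
    show ?thesis
    proof (rule eventually_mono[OF eventually_at_right_less], intro conjI impI)
      fix x assume "x0 < x"
      then have "0 \<le> (c I - c I0) * (x - x0)" using \<open>c I0 \<le> c I\<close> by simp
      then show "c I0 * x + e I0 \<le> c I * x + e I" using diff[of x] by simp
      show "c I * x + e I = c I0 * x + e I0 \<Longrightarrow> c I = c I0"
        using diff[of x] \<open>x0 < x\<close> by simp
    qed
  next
    case False
    then have "0 < c I * x0 + e I - (c I0 * x0 + e I0)" using min0 \<open>I \<in> A\<close> by force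
    moreover have "((\<lambda>x. c I * x + e I - (c I0 * x + e I0)) \<longlongrightarrow> c I * x0 + e I - (c I0 * x0 + e I0)) (at_right x0)"
      by (intro tendsto_intros)
    ultimately have "\<forall>\<^sub>F x in at_right x0. 0 < c I * x + e I - (c I0 * x + e I0)"
      using order_tendstoD(1) by blast
    then show ?thesis by (rule eventually_mono) auto
  qed
qed

lemma lower_envelope_eventually_affine_at_right:
  fixes c e :: "'a \<Rightarrow> real"
  assumes "finite A" and "A \<noteq> {}" and "x0 < b"
    and env: "\<And>x. x0 \<le> x \<Longrightarrow> x < b \<Longrightarrow> F x = Min ((\<lambda>I. c I * x + e I) ` A)"
  obtains I0 where "I0 \<in> A" and "F x0 = c I0 * x0 + e I0"
    and "\<forall>\<^sub>F x in at_right x0. F x = c I0 * x + e I0 \<and> (\<forall>I\<in>A. c I * x + e I = F x \<longrightarrow> c I = c I0)"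
proof -
  define active where "active = {I\<in>A. c I * x0 + e I = F x0}"
  have env_x0: "F x0 = Min ((\<lambda>I. c I * x0 + e I) ` A)" using env \<open>x0 < b\<close> by simp
  moreover have "Min ((\<lambda>I. c I * x0 + e I) ` A) \<in> (\<lambda>I. c I * x0 + e I) ` A"
    using \<open>finite A\<close> \<open>A \<noteq> {}\<close> by (intro Min_in) simp_all
  ultimately obtain I1 where "I1 \<in> A" "F x0 = c I1 * x0 + e I1" by auto
  then have "active \<noteq> {}" by (auto simp: active_def)
  have "finite active" using \<open>finite A\<close> by (simp add: active_def)
  then have "Min (c ` active) \<in> c ` active" using \<open>active \<noteq> {}\<close> by simp
  then obtain I0 where I0: "I0 \<in> active" "c I0 = Min (c ` active)" by (metis imageE)
  have F_x0: "F x0 = c I0 * x0 + e I0" using I0 by (simp add: active_def)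
  have "\<forall>I\<in>A. c I0 * x0 + e I0 \<le> c I * x0 + e I"
    using env_x0 F_x0 \<open>finite A\<close> by simp
  moreover have "\<forall>I\<in>A. c I * x0 + e I = c I0 * x0 + e I0 \<longrightarrow> c I0 \<le> c I"
  proof (intro ballI impI)
    fix I assume "I \<in> A" "c I * x0 + e I = c I0 * x0 + e I0"
    then have "I \<in> active" using F_x0 by (simp add: active_def)
    then show "c I0 \<le> c I" using I0(2) \<open>finite active\<close> by simp
  qed
  ultimately have "\<forall>\<^sub>F x in at_right x0. \<forall>I\<in>A.
      c I0 * x + e I0 \<le> c I * x + e I \<and> (c I * x + e I = c I0 * x + e I0 \<longrightarrow> c I = c I0)"
    by (rule eventually_least_slope_minimal_at_right[OF \<open>finite A\<close>])
  with eventually_at_right_real[OF \<open>x0 < b\<close>]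
  have "\<forall>\<^sub>F x in at_right x0. F x = c I0 * x + e I0 \<and> (\<forall>I\<in>A. c I * x + e I = F x \<longrightarrow> c I = c I0)"
  proof (rule eventually_elim2)
    fix x assume "x \<in> {x0<..<b}" and minimal: "\<forall>I\<in>A.
      c I0 * x + e I0 \<le> c I * x + e I \<and> (c I * x + e I = c I0 * x + e I0 \<longrightarrow> c I = c I0)"
    then have "F x = c I0 * x + e I0"
      using env I0(1) \<open>finite A\<close> by (auto simp: active_def intro!: Min_eqI)
    with minimal show "F x = c I0 * x + e I0 \<and> (\<forall>I\<in>A. c I * x + e I = F x \<longrightarrow> c I = c I0)"
      by auto
  qed
  with that I0(1) F_x0 show thesis by (simp add: active_def)
qed

lemma rslope_lower_envelope_attained_twice:
  fixes c e :: "'a \<Rightarrow> real"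
  assumes "finite A" and "x0 < b"
    and env: "\<And>x. x0 \<le> x \<Longrightarrow> x < b \<Longrightarrow> F x = Min ((\<lambda>I. c I * x + e I) ` A)"
    and twice: "\<And>x. x0 < x \<Longrightarrow> x < b \<Longrightarrow>
                  \<exists>I\<in>A. \<exists>J\<in>A. I \<noteq> J \<and> c I * x + e I = F x \<and> c J * x + e J = F x"
  shows "\<exists>I\<in>A. \<exists>J\<in>A. I \<noteq> J \<and> rslope F x0 = c I \<and> rslope F x0 = c J"
proof -
  have "A \<noteq> {}" using twice[of "(x0 + b) / 2"] \<open>x0 < b\<close> by auto
  then obtain I0 where "I0 \<in> A" and F_x0: "F x0 = c I0 * x0 + e I0"
    and ev: "\<forall>\<^sub>F x in at_right x0. F x = c I0 * x + e I0 \<and> (\<forall>I\<in>A. c I * x + e I = F x \<longrightarrow> c I = c I0)"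
    using lower_envelope_eventually_affine_at_right[OF \<open>finite A\<close> _ \<open>x0 < b\<close> env] by blast
  have "((\<lambda>x. c I0 * x + e I0) has_real_derivative c I0) (at_right x0)"
    by (auto intro!: derivative_eq_intros)
  then have "(F has_real_derivative c I0) (at_right x0)"
    by (rule has_field_derivative_cong_eventually[THEN iffD1, rotated 2])
      (use ev F_x0 in \<open>auto elim: eventually_mono\<close>)
  then have slope: "rslope F x0 = c I0" by (rule rslope_eqI)
  obtain x where "x \<in> {x0<..<b}" and x: "\<forall>I\<in>A. c I * x + e I = F x \<longrightarrow> c I = c I0"
    using eventually_happens'[OF _ eventually_conj[OF eventually_at_right_real[OF \<open>x0 < b\<close>] ev]]
    by auto
  then obtain I J where "I \<in> A" "J \<in> A" "I \<noteq> J" "c I * x + e I = F x" "c J * x + e J = F x"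
    using twice[of x] by auto
  with x slope show ?thesis by metis
qed

lemma of_int_sum_mset: "of_int (\<Sum>i\<in>#I. f i) = (\<Sum>i\<in>#I. of_int (f i))"
  by (induction I) auto

lemma sum_mset_affine:
  assumes "\<forall>i\<in>#I. f i = a i + c i * (x :: real)"
  shows "(\<Sum>i\<in>#I. f i) = (\<Sum>i\<in>#I. a i) + (\<Sum>i\<in>#I. c i) * x"
  using assms by (induction I) (auto simp: algebra_simps)

lemma sigma_theta_attained_twice:
  fixes \<psi> :: "nat \<Rightarrow> cpt \<Rightarrow> real" and m :: "nat \<Rightarrow> int"
  assumes "finite A" and "0 < N t"
    and bridge: "\<forall>I\<in>A. \<forall>i\<in>#I. \<forall>x\<in>{0..N t}. \<psi> i (Br t x) = \<psi> i (Br t 0) + of_int (m i) * x"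
    and on_bridge: "\<forall>x\<in>{0..N t}. Br t x \<in> P"
    and "min_twice P \<psi> A b"
  shows "\<exists>I\<in>A. \<exists>J\<in>A. I \<noteq> J \<and> sigma N (theta \<psi> A b) t = of_int (\<Sum>i\<in>#I. m i)
                                \<and> sigma N (theta \<psi> A b) t = of_int (\<Sum>i\<in>#J. m i)"
proof -
  define c where "c I = real_of_int (\<Sum>i\<in>#I. m i)" for I
  define e where "e I = psiI \<psi> I (Br t 0) + b I" for I
  have affine: "psiI \<psi> I (Br t x) + b I = c I * x + e I" if "I \<in> A" "x \<in> {0..N t}" for I x
  proof -
    have "\<forall>i\<in>#I. \<psi> i (Br t x) = \<psi> i (Br t 0) + of_int (m i) * x" using bridge that by blast
    then have "psiI \<psi> I (Br t x) = psiI \<psi> I (Br t 0) + (\<Sum>i\<in>#I. of_int (m i)) * x"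
      unfolding psiI_def by (rule sum_mset_affine)
    then show ?thesis by (simp add: c_def e_def of_int_sum_mset)
  qed
  have "\<exists>I\<in>A. \<exists>J\<in>A. I \<noteq> J \<and> rslope (\<lambda>x. theta \<psi> A b (Br t x)) (N t / 2) = c I
                              \<and> rslope (\<lambda>x. theta \<psi> A b (Br t x)) (N t / 2) = c J"
  proof (rule rslope_lower_envelope_attained_twice[OF \<open>finite A\<close>])
    show "N t / 2 < N t" using \<open>0 < N t\<close> by simp
  next
    fix x assume "N t / 2 \<le> x" "x < N t"
    then have "x \<in> {0..N t}" using \<open>0 < N t\<close> by simp
    then have "(\<lambda>I. psiI \<psi> I (Br t x) + b I) ` A = (\<lambda>I. c I * x + e I) ` A"
      using affine by (intro image_cong) auto
    then show "theta \<psi> A b (Br t x) = Min ((\<lambda>I. c I * x + e I) ` A)" by (simp add: theta_def)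
  next
    fix x assume "N t / 2 < x" "x < N t"
    then have "x \<in> {0..N t}" using \<open>0 < N t\<close> by simp
    then obtain I J where "I \<in> A" "J \<in> A" "I \<noteq> J"
      "psiI \<psi> I (Br t x) + b I = theta \<psi> A b (Br t x)" "psiI \<psi> J (Br t x) + b J = theta \<psi> A b (Br t x)"
      using \<open>min_twice P \<psi> A b\<close> on_bridge unfolding min_twice_def by blast
    with \<open>x \<in> {0..N t}\<close> affine show "\<exists>I\<in>A. \<exists>J\<in>A.
      I \<noteq> J \<and> c I * x + e I = theta \<psi> A b (Br t x) \<and> c J * x + e J = theta \<psi> A b (Br t x)"
      by metis
  qed
  then show ?thesis unfolding sigma_def c_def .
qed

lemma tab_divisor_sigma_attained_twice:
  assumes adm: "admissible r s K L M N" and tab: "tab_divisor r s L M N D"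
    and psi: "\<forall>i\<le>r. is_psi ((r + 1) * s) L M N r D i (\<psi> i)"
    and "finite A" and A: "\<forall>I\<in>A. set_mset I \<subseteq> {0..r}"
    and min2: "min_twice (cpoints ((r + 1) * s) L M N) \<psi> A b"
    and t: "t \<le> (r + 1) * s"
  shows "\<exists>I\<in>A. \<exists>J\<in>A. I \<noteq> J \<and> sigma N (theta \<psi> A b) t = of_int (\<Sum>i\<in>#I. bslope r s t i)
                              \<and> sigma N (theta \<psi> A b) t = of_int (\<Sum>i\<in>#J. bslope r s t i)"
proof (rule sigma_theta_attained_twice[OF \<open>finite A\<close>])
  show "0 < N t" using adm t unfolding admissible_def Let_def by auto
  show "\<forall>I\<in>A. \<forall>i\<in>#I. \<forall>x\<in>{0..N t}. \<psi> i (Br t x) = \<psi> i (Br t 0) + of_int (bslope r s t i) * x"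
  proof (intro ballI)
    fix I i x assume "I \<in> A" "i \<in># I" "x \<in> {0..N t}"
    then have "i \<le> r" using A by fastforce
    with tab psi t have "\<forall>x\<in>{0..N t}. \<forall>y\<in>{0..N t}.
        \<psi> i (Br t y) - \<psi> i (Br t x) = of_int (bslope r s t i) * (y - x)"
      unfolding tab_divisor_def Let_def by blast
    with \<open>x \<in> {0..N t}\<close>
    have "\<psi> i (Br t x) - \<psi> i (Br t 0) = of_int (bslope r s t i) * (x - 0)" by auto
    then show "\<psi> i (Br t x) = \<psi> i (Br t 0) + of_int (bslope r s t i) * x" by simp
  qed
  show "\<forall>x\<in>{0..N t}. Br t x \<in> cpoints ((r + 1) * s) L M N"
    using t by (auto simp: cpoints_def)
qed (fact min2)

lemma lp_closed_form:
  assumes "i < r" and "t \<le> r * s"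
  shows "lp r s t i = int r - int i + int (min s (t - i * s))"
  using assms(2)
proof (induction t)
  case 0
  then show ?case by simp
next
  case (Suc t)
  then have "t div s < r" by (simp add: less_mult_imp_div_less)
  moreover have "0 < s" using Suc.prems by (cases s) auto
  then have "i = t div s \<longleftrightarrow> i * s \<le> t \<and> t < i * s + s"
    using div_nat_eqI[of s i t] div_times_less_eq_dividend[of t s] dividend_less_div_times[of s t]
    by (auto simp: mult.commute)
  ultimately have "lp r s (Suc t) i = lp r s t i + (if i * s \<le> t \<and> t < i * s + s then 1 else 0)"
    by auto
  with Suc show ?case by auto
qed

lemma bslope_at_s:
  assumes "i \<le> r" and "0 < r"
  shows "bslope r s s i = int r - int i + (if i = 0 then int s else 0)"
proof (cases "i = r")
  case False
  then have "i < r" using assms(1) by simp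
  moreover have "s - i * s = (if i = 0 then s else 0)" by simp
  ultimately show ?thesis using lp_closed_form[of i r s s] assms(2) by (simp add: bslope_def)
qed (use assms in \<open>simp add: bslope_def\<close>)

lemma bslope_at_rs:
  assumes "i \<le> r"
  shows "bslope r s (r * s) i = (if i = r then 0 else int r - int i + int s)"
proof (cases "i = r")
  case False
  then have "i < r" using assms by simp
  then have "s \<le> (r - i) * s" by auto
  then have "min s (r * s - i * s) = s" by (simp add: diff_mult_distrib)
  then show ?thesis using lp_closed_form[OF \<open>i < r\<close>, of "r * s" s] \<open>i < r\<close> by (simp add: bslope_def)
qed (simp add: bslope_def)

lemma mset_size_3_sorted:
  assumes "size (I :: 'a :: linorder multiset) = 3"
  obtains x y z where "x \<le> y" "y \<le> z" "I = {#x, y, z#}"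
proof -
  define xs where "xs = sorted_list_of_multiset I"
  have "mset xs = I" "sorted xs" by (auto simp: xs_def)
  moreover have "length xs = 3" using assms \<open>mset xs = I\<close> by (metis size_mset)
  then obtain x y z where "xs = [x, y, z]" by (auto simp: numeral_3_eq_3 length_Suc_conv)
  ultimately show thesis using that by (auto simp: add_mset_commute)
qed

lemma distinct_sorted_triples:
  fixes I J :: "nat multiset"
  assumes "size I = 3" "set_mset I \<subseteq> {0..r}" "size J = 3" "set_mset J \<subseteq> {0..r}" "I \<noteq> J"
  obtains x y z x' y' z'
    where "x \<le> y" "y \<le> z" "z \<le> r" "I = {#x, y, z#}"
      and "x' \<le> y'" "y' \<le> z'" "z' \<le> r" "J = {#x', y', z'#}"
      and "(x, y, z) \<noteq> (x', y', z')"
proof -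
  obtain x y z where I: "x \<le> y" "y \<le> z" "I = {#x, y, z#}" using mset_size_3_sorted \<open>size I = 3\<close> .
  obtain x' y' z' where J: "x' \<le> y'" "y' \<le> z'" "J = {#x', y', z'#}" using mset_size_3_sorted \<open>size J = 3\<close> .
  have "z \<le> r" "z' \<le> r" using I(3) J(3) assms(2,4) by auto
  moreover have "(x, y, z) \<noteq> (x', y', z')" using I(3) J(3) \<open>I \<noteq> J\<close> by auto
  ultimately show thesis using that I J by blast
qed

lemma coinciding_bslope_sums_at_s:
  fixes I J :: "nat multiset"
  assumes "3 \<le> r" "1 \<le> s" "r \<le> s + 1"
    and "size I = 3" "set_mset I \<subseteq> {0..r}" "size J = 3" "set_mset J \<subseteq> {0..r}" "I \<noteq> J"
    and eq: "(\<Sum>i\<in>#I. bslope r s s i) = (\<Sum>i\<in>#J. bslope r s s i)"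
  shows "(\<Sum>i\<in>#I. bslope r s s i) \<le> 3 * int r + int s - 4"
proof -
  obtain x y z x' y' z' where I: "x \<le> y" "y \<le> z" "z \<le> r" "I = {#x, y, z#}"
    and J: "x' \<le> y'" "y' \<le> z'" "z' \<le> r" "J = {#x', y', z'#}" and "(x, y, z) \<noteq> (x', y', z')"
    using distinct_sorted_triples assms(4-8) .
  with assms(1-3) eq show ?thesis by (auto simp: bslope_at_s split: if_splits)
qed

lemma coinciding_bslope_sums_at_rs:
  fixes I J :: "nat multiset"
  assumes "3 \<le> r" "1 \<le> s" "r \<le> s + 1"
    and "size I = 3" "set_mset I \<subseteq> {0..r}" "size J = 3" "set_mset J \<subseteq> {0..r}" "I \<noteq> J"
    and eq: "(\<Sum>i\<in>#I. bslope r s (r * s) i) = (\<Sum>i\<in>#J. bslope r s (r * s) i)"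
  shows "(\<Sum>i\<in>#I. bslope r s (r * s) i) \<ge> 2 * int s + 4"
proof -
  obtain x y z x' y' z' where I: "x \<le> y" "y \<le> z" "z \<le> r" "I = {#x, y, z#}"
    and J: "x' \<le> y'" "y' \<le> z'" "z' \<le> r" "J = {#x', y', z'#}" and "(x, y, z) \<noteq> (x', y', z')"
    using distinct_sorted_triples assms(4-8) .
  with assms(1-3) eq show ?thesis by (auto simp: bslope_at_rs split: if_splits)
qed

theorem lemma6p1:
  fixes r s :: nat
  assumes "3 \<le> r" and "1 \<le> s" and "r \<le> s + 1"
  shows "\<exists>K>0. \<forall>L M N (D :: cpt \<Rightarrow> int) (\<psi> :: nat \<Rightarrow> cpt \<Rightarrow> real)
            (A :: nat multiset set) (b :: nat multiset \<Rightarrow> real).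
     admissible r s K L M N \<and> tab_divisor r s L M N D \<and>
     (\<forall>i\<le>r. is_psi ((r + 1) * s) L M N r D i (\<psi> i)) \<and>
     A \<subseteq> {I. size I = 3 \<and> set_mset I \<subseteq> {0..r}} \<and>
     min_twice (cpoints ((r + 1) * s) L M N) \<psi> A b
     \<longrightarrow> sigma N (theta \<psi> A b) s \<le> 3 * real r + real s - 4
       \<and> sigma N (theta \<psi> A b) (r * s) \<ge> 2 * real s + 4"
proof (intro exI[of _ "1 :: real"] conjI allI impI)
  fix L M N D \<psi> A b
  assume hyps: "admissible r s 1 L M N \<and> tab_divisor r s L M N D \<and>
     (\<forall>i\<le>r. is_psi ((r + 1) * s) L M N r D i (\<psi> i)) \<and>
     A \<subseteq> {I. size I = 3 \<and> set_mset I \<subseteq> {0..r}} \<and>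
     min_twice (cpoints ((r + 1) * s) L M N) \<psi> A b"
  then have A: "\<forall>I\<in>A. size I = 3 \<and> set_mset I \<subseteq> {0..r}" by blast
  then have "A \<subseteq> multisets_of_size {0..r} 3" by (auto simp: multisets_of_size_def)
  then have "finite A" by (rule finite_subset) auto
  note twice = tab_divisor_sigma_attained_twice[OF _ _ _ \<open>finite A\<close>, of r s 1 L M N D \<psi> b]
  obtain I J where "I \<in> A" "J \<in> A" "I \<noteq> J"
    and "sigma N (theta \<psi> A b) s = of_int (\<Sum>i\<in>#I. bslope r s s i)"
    and "sigma N (theta \<psi> A b) s = of_int (\<Sum>i\<in>#J. bslope r s s i)"
    using twice[of s] hyps A by auto
  with coinciding_bslope_sums_at_s[OF assms, of I J] A
  show "sigma N (theta \<psi> A b) s \<le> 3 * real r + real s - 4" by auto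
  obtain I J where "I \<in> A" "J \<in> A" "I \<noteq> J"
    and "sigma N (theta \<psi> A b) (r * s) = of_int (\<Sum>i\<in>#I. bslope r s (r * s) i)"
    and "sigma N (theta \<psi> A b) (r * s) = of_int (\<Sum>i\<in>#J. bslope r s (r * s) i)"
    using twice[of "r * s"] hyps A by auto
  with coinciding_bslope_sums_at_rs[OF assms, of I J] A
  show "sigma N (theta \<psi> A b) (r * s) \<ge> 2 * real s + 4" by auto
qed simp

end
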